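(* Let $K$ be a semiring, $G$ a finite group and $M$ a $K[G]$-module. Suppose $M$ is weakly reflexive as a $K$-module and $M^\vee$ is finitely generated (as a $K$-module). Then $M$ is isomorphic to a $K[G]$-submodule of $K[G]^n$ for some $n$.
   Context: Semirings are commutative; $K[G]$ is the group semiring. $M^\vee=\mathrm{Hom}_K(M,K)$, which carries the right $G$-action $(\phi g)(x)=\phi(gx)$. $M$ is weakly reflexive if the canonical map $M\to M^{\vee\vee}$, $x\mapsto(\psi\mapsto\psi(x))$, is injective. *)

theory Defs
  imports "HOL-Algebra.Group"
begin

text \<open>Elements of K[G] are functions G -> K (vanishing outside the carrier);
  since G is finite these are exactly the finite formal K-combinations of group elements.\<close>

definition group_semiring :: "('g, 'b) monoid_scheme \<Rightarrow> ('g \<Rightarrow> 'k::comm_semiring_1) set" where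
  "group_semiring G = {f. \<forall>x. x \<notin> carrier G \<longrightarrow> f x = 0}"

definition gs_add :: "('g \<Rightarrow> 'k::comm_semiring_1) \<Rightarrow> ('g \<Rightarrow> 'k) \<Rightarrow> ('g \<Rightarrow> 'k)" where
  "gs_add f h = (\<lambda>x. f x + h x)"

definition gs_zero :: "'g \<Rightarrow> 'k::comm_semiring_1" where
  "gs_zero = (\<lambda>x. 0)"

definition gs_mult :: "('g, 'b) monoid_scheme \<Rightarrow> ('g \<Rightarrow> 'k::comm_semiring_1) \<Rightarrow> ('g \<Rightarrow> 'k) \<Rightarrow> ('g \<Rightarrow> 'k)" where
  "gs_mult G f h = (\<lambda>x. if x \<in> carrier G
      then (\<Sum>y\<in>carrier G. f y * h (inv\<^bsub>G\<^esub> y \<otimes>\<^bsub>G\<^esub> x)) else 0)"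

text \<open>The element k * 1_G of K[G]; gs_scalar G 1 is the unit of K[G].\<close>
definition gs_scalar :: "('g, 'b) monoid_scheme \<Rightarrow> 'k::comm_semiring_1 \<Rightarrow> ('g \<Rightarrow> 'k)" where
  "gs_scalar G k = (\<lambda>x. if x = \<one>\<^bsub>G\<^esub> then k else 0)"

definition is_semimodule ::
  "'r set \<Rightarrow> ('r \<Rightarrow> 'r \<Rightarrow> 'r) \<Rightarrow> ('r \<Rightarrow> 'r \<Rightarrow> 'r) \<Rightarrow> 'r \<Rightarrow> 'r
   \<Rightarrow> ('r \<Rightarrow> 'm::comm_monoid_add \<Rightarrow> 'm) \<Rightarrow> bool" where
  "is_semimodule R pl tm zr on smul \<longleftrightarrow>
     (\<forall>r\<in>R. \<forall>x y. smul r (x + y) = smul r x + smul r y) \<and>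
     (\<forall>r\<in>R. \<forall>s\<in>R. \<forall>x. smul (pl r s) x = smul r x + smul s x) \<and>
     (\<forall>r\<in>R. \<forall>s\<in>R. \<forall>x. smul (tm r s) x = smul r (smul s x)) \<and>
     (\<forall>x. smul on x = x) \<and>
     (\<forall>x. smul zr x = 0) \<and>
     (\<forall>r\<in>R. smul r 0 = 0)"

definition is_KG_module :: "('g, 'b) monoid_scheme \<Rightarrow> (('g \<Rightarrow> 'k::comm_semiring_1) \<Rightarrow> 'm::comm_monoid_add \<Rightarrow> 'm) \<Rightarrow> bool" where
  "is_KG_module G act \<longleftrightarrow>
     is_semimodule (group_semiring G) gs_add (gs_mult G) gs_zero (gs_scalar G 1) act"

text \<open>Restriction of scalars along K -> K[G], k |-> k 1_G.\<close>
definition K_smul :: "('g, 'b) monoid_scheme \<Rightarrow> (('g \<Rightarrow> 'k::comm_semiring_1) \<Rightarrow> 'm \<Rightarrow> 'm) \<Rightarrow> 'k \<Rightarrow> 'm \<Rightarrow> 'm" where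
  "K_smul G act k x = act (gs_scalar G k) x"

definition K_dual :: "('g, 'b) monoid_scheme \<Rightarrow> (('g \<Rightarrow> 'k::comm_semiring_1) \<Rightarrow> 'm::comm_monoid_add \<Rightarrow> 'm) \<Rightarrow> ('m \<Rightarrow> 'k) set" where
  "K_dual G act = {\<psi>. (\<forall>x y. \<psi> (x + y) = \<psi> x + \<psi> y) \<and>
                      (\<forall>k x. \<psi> (K_smul G act k x) = k * \<psi> x)}"

definition canonical_bidual_map :: "('g, 'b) monoid_scheme \<Rightarrow> (('g \<Rightarrow> 'k::comm_semiring_1) \<Rightarrow> 'm::comm_monoid_add \<Rightarrow> 'm) \<Rightarrow> 'm \<Rightarrow> (('m \<Rightarrow> 'k) \<Rightarrow> 'k)" where
  "canonical_bidual_map G act x = (\<lambda>\<psi>\<in>K_dual G act. \<psi> x)"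

definition weakly_reflexive :: "('g, 'b) monoid_scheme \<Rightarrow> (('g \<Rightarrow> 'k::comm_semiring_1) \<Rightarrow> 'm::comm_monoid_add \<Rightarrow> 'm) \<Rightarrow> bool" where
  "weakly_reflexive G act \<longleftrightarrow> inj (canonical_bidual_map G act)"

definition dual_fin_gen :: "('g, 'b) monoid_scheme \<Rightarrow> (('g \<Rightarrow> 'k::comm_semiring_1) \<Rightarrow> 'm::comm_monoid_add \<Rightarrow> 'm) \<Rightarrow> bool" where
  "dual_fin_gen G act \<longleftrightarrow>
     (\<exists>S. finite S \<and> S \<subseteq> K_dual G act \<and>
          (\<forall>\<psi>\<in>K_dual G act. \<exists>c. \<psi> = (\<lambda>x. \<Sum>s\<in>S. c s * s x)))"

text \<open>K[G]^n: tuples (v_0, ..., v_(n-1)) of elements of K[G], encoded as functions on nat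
  vanishing from index n on; K[G] acts componentwise by left multiplication.\<close>
definition free_KG :: "('g, 'b) monoid_scheme \<Rightarrow> nat \<Rightarrow> (nat \<Rightarrow> 'g \<Rightarrow> 'k::comm_semiring_1) set" where
  "free_KG G n = {v. (\<forall>i<n. v i \<in> group_semiring G) \<and> (\<forall>i\<ge>n. v i = gs_zero)}"

definition free_act :: "('g, 'b) monoid_scheme \<Rightarrow> ('g \<Rightarrow> 'k::comm_semiring_1) \<Rightarrow> (nat \<Rightarrow> 'g \<Rightarrow> 'k) \<Rightarrow> (nat \<Rightarrow> 'g \<Rightarrow> 'k)" where
  "free_act G a v = (\<lambda>i. gs_mult G a (v i))"

definition KG_submodule_of_free :: "('g, 'b) monoid_scheme \<Rightarrow> nat \<Rightarrow> (nat \<Rightarrow> 'g \<Rightarrow> 'k::comm_semiring_1) set \<Rightarrow> bool" where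
  "KG_submodule_of_free G n N \<longleftrightarrow>
     N \<subseteq> free_KG G n \<and> (\<lambda>i. gs_zero) \<in> N \<and>
     (\<forall>v\<in>N. \<forall>w\<in>N. (\<lambda>i. gs_add (v i) (w i)) \<in> N) \<and>
     (\<forall>a\<in>group_semiring G. \<forall>v\<in>N. free_act G a v \<in> N)"

definition KG_iso_onto :: "('g, 'b) monoid_scheme \<Rightarrow> (('g \<Rightarrow> 'k::comm_semiring_1) \<Rightarrow> 'm::comm_monoid_add \<Rightarrow> 'm)
    \<Rightarrow> ('m \<Rightarrow> nat \<Rightarrow> 'g \<Rightarrow> 'k) \<Rightarrow> (nat \<Rightarrow> 'g \<Rightarrow> 'k) set \<Rightarrow> bool" where
  "KG_iso_onto G act \<phi> N \<longleftrightarrow>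
     bij_betw \<phi> UNIV N \<and>
     (\<forall>x y. \<phi> (x + y) = (\<lambda>i. gs_add (\<phi> x i) (\<phi> y i))) \<and>
     \<phi> 0 = (\<lambda>i. gs_zero) \<and>
     (\<forall>a\<in>group_semiring G. \<forall>x. \<phi> (act a x) = free_act G a (\<phi> x))"

end

theory Submission
  imports Defs "HOL-Library.Function_Algebras"
begin

text \<open>Every K-linear \<psi> : M \<rightarrow> K lifts to the K[G]-linear map
  x \<mapsto> \<Sum> g. \<psi>(g\<inverse> x) g from M to K[G].  Lifting a finite generating family
  \<psi>_0, \<dots>, \<psi>_(n-1) of M^v gives a K[G]-linear map M \<rightarrow> K[G]^n whose coefficient at 1
  recovers the values \<psi>_i(x); since every functional is a K-combination of the \<psi>_i,
  weak reflexivity makes this map injective, so M is isomorphic to its image.\<close>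

definition gs_basis :: "('g, 'b) monoid_scheme \<Rightarrow> 'g \<Rightarrow> 'g \<Rightarrow> 'k::comm_semiring_1" where
  "gs_basis G g = (\<lambda>x. if x = g then 1 else 0)"

lemma sum_fun_apply: "(\<Sum>i\<in>A. f i) x = (\<Sum>i\<in>A. f i x)"
  by (induction A rule: infinite_finite_induct) auto

lemma gs_add_eq_plus: "gs_add f h = f + h"
  by (simp add: gs_add_def fun_eq_iff)

lemma gs_zero_eq_zero: "gs_zero = 0"
  by (simp add: gs_zero_def fun_eq_iff)

lemma gs_basis_in_group_semiring: "g \<in> carrier G \<Longrightarrow> gs_basis G g \<in> group_semiring G"
  by (auto simp: gs_basis_def group_semiring_def)

lemma gs_mult_in_group_semiring: "gs_mult G a b \<in> group_semiring G"
  by (auto simp: gs_mult_def group_semiring_def)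

lemma sum_in_group_semiring:
  "(\<And>t. t \<in> T \<Longrightarrow> r t \<in> group_semiring G) \<Longrightarrow> (\<Sum>t\<in>T. r t) \<in> group_semiring G"
  by (induction T rule: infinite_finite_induct) (auto simp: group_semiring_def)

lemma gs_mult_zero_right: "gs_mult G a gs_zero = gs_zero"
  by (simp add: gs_mult_def gs_zero_def fun_eq_iff)

context group
begin

lemma gs_scalar_in_group_semiring: "gs_scalar G k \<in> group_semiring G"
  by (auto simp: gs_scalar_def group_semiring_def)

lemma gs_mult_scalar_left:
  assumes "finite (carrier G)"
  shows "gs_mult G (gs_scalar G k) f x = (if x \<in> carrier G then k * f x else 0)"
proof -
  have "(\<Sum>y\<in>carrier G. gs_scalar G k y * f (inv y \<otimes> x)) = k * f (inv \<one> \<otimes> x)"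
    using assms by (simp add: gs_scalar_def if_distrib if_distribR sum.delta cong: if_cong)
  then show ?thesis by (simp add: gs_mult_def)
qed

lemma gs_mult_basis_left:
  assumes "finite (carrier G)" "h \<in> carrier G" "x \<in> carrier G"
  shows "gs_mult G (gs_basis G h) a x = a (inv h \<otimes> x)"
  using assms by (simp add: gs_mult_def gs_basis_def if_distrib if_distribR sum.delta cong: if_cong)

lemma group_semiring_basis_expansion:
  assumes "finite (carrier G)" "b \<in> group_semiring G"
  shows "b = (\<Sum>g\<in>carrier G. gs_mult G (gs_scalar G (b g)) (gs_basis G g))"
proof
  fix x
  show "b x = (\<Sum>g\<in>carrier G. gs_mult G (gs_scalar G (b g)) (gs_basis G g)) x"
    using assms
    by (auto simp: sum_fun_apply gs_mult_scalar_left gs_basis_def group_semiring_def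
        if_distrib if_distribR sum.delta cong: if_cong)
qed

end

lemma KG_module_act_add_left:
  "is_KG_module G act \<Longrightarrow> r \<in> group_semiring G \<Longrightarrow> s \<in> group_semiring G \<Longrightarrow>
    act (r + s) x = act r x + act s x"
  by (simp add: is_KG_module_def is_semimodule_def gs_add_eq_plus)

lemma KG_module_act_add_right:
  "is_KG_module G act \<Longrightarrow> r \<in> group_semiring G \<Longrightarrow> act r (x + y) = act r x + act r y"
  by (simp add: is_KG_module_def is_semimodule_def)

lemma KG_module_act_mult:
  "is_KG_module G act \<Longrightarrow> r \<in> group_semiring G \<Longrightarrow> s \<in> group_semiring G \<Longrightarrow>
    act (gs_mult G r s) x = act r (act s x)"
  by (simp add: is_KG_module_def is_semimodule_def)

lemma KG_module_act_one: "is_KG_module G act \<Longrightarrow> act (gs_scalar G 1) x = x"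
  by (simp add: is_KG_module_def is_semimodule_def)

lemma KG_module_act_zero_left: "is_KG_module G act \<Longrightarrow> act 0 x = 0"
  by (simp add: is_KG_module_def is_semimodule_def gs_zero_eq_zero)

lemma KG_module_act_zero_right: "is_KG_module G act \<Longrightarrow> r \<in> group_semiring G \<Longrightarrow> act r 0 = 0"
  by (simp add: is_KG_module_def is_semimodule_def)

lemma KG_module_act_sum_left:
  assumes "is_KG_module G act" "\<And>t. t \<in> T \<Longrightarrow> r t \<in> group_semiring G"
  shows "act (\<Sum>t\<in>T. r t) x = (\<Sum>t\<in>T. act (r t) x)"
  using assms(2)
  by (induction T rule: infinite_finite_induct)
    (simp_all add: KG_module_act_zero_left[OF assms(1)] KG_module_act_add_left[OF assms(1)]
      sum_in_group_semiring)

lemma K_dual_add: "\<psi> \<in> K_dual G act \<Longrightarrow> \<psi> (x + y) = \<psi> x + \<psi> y"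
  by (simp add: K_dual_def)

lemma K_dual_K_smul: "\<psi> \<in> K_dual G act \<Longrightarrow> \<psi> (K_smul G act k x) = k * \<psi> x"
  by (simp add: K_dual_def)

text \<open>Additivity alone does not give \<psi> 0 = 0 over a semiring; K-linearity at k = 0 does.\<close>

lemma K_dual_zero:
  assumes "is_KG_module G act" "\<psi> \<in> K_dual G act"
  shows "\<psi> 0 = 0"
proof -
  have "K_smul G act 0 0 = 0"
    using KG_module_act_zero_left[OF assms(1)] by (simp add: K_smul_def gs_scalar_def zero_fun_def)
  then show ?thesis
    using K_dual_K_smul[OF assms(2), of 0 0] by simp
qed

lemma K_dual_sum:
  assumes "is_KG_module G act" "\<psi> \<in> K_dual G act"
  shows "\<psi> (\<Sum>t\<in>T. v t) = (\<Sum>t\<in>T. \<psi> (v t))"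
  by (induction T rule: infinite_finite_induct)
    (simp_all add: K_dual_zero[OF assms] K_dual_add[OF assms(2)])

lemma (in group) K_dual_act_expansion:
  assumes "finite (carrier G)" "is_KG_module G act" "\<psi> \<in> K_dual G act" "b \<in> group_semiring G"
  shows "\<psi> (act b x) = (\<Sum>g\<in>carrier G. b g * \<psi> (act (gs_basis G g) x))"
proof -
  have "\<psi> (act b x) = (\<Sum>g\<in>carrier G. \<psi> (act (gs_mult G (gs_scalar G (b g)) (gs_basis G g)) x))"
    by (subst group_semiring_basis_expansion[OF assms(1,4)])
      (simp add: KG_module_act_sum_left[OF assms(2)] gs_mult_in_group_semiring
        K_dual_sum[OF assms(2,3)])
  also have "\<dots> = (\<Sum>g\<in>carrier G. b g * \<psi> (act (gs_basis G g) x))"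
    by (intro sum.cong refl)
      (simp add: KG_module_act_mult[OF assms(2)] gs_scalar_in_group_semiring
        gs_basis_in_group_semiring K_dual_K_smul[OF assms(3), unfolded K_smul_def])
  finally show ?thesis .
qed

definition KG_lift ::
  "('g, 'b) monoid_scheme \<Rightarrow> (('g \<Rightarrow> 'k::comm_semiring_1) \<Rightarrow> 'm \<Rightarrow> 'm) \<Rightarrow> ('m \<Rightarrow> 'k) \<Rightarrow> 'm \<Rightarrow> 'g \<Rightarrow> 'k"
  where "KG_lift G act \<psi> x = (\<lambda>h. if h \<in> carrier G then \<psi> (act (gs_basis G (inv\<^bsub>G\<^esub> h)) x) else 0)"

lemma KG_lift_in_group_semiring: "KG_lift G act \<psi> x \<in> group_semiring G"
  by (simp add: KG_lift_def group_semiring_def)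

context group
begin

lemma KG_lift_add:
  assumes "is_KG_module G act" "\<psi> \<in> K_dual G act"
  shows "KG_lift G act \<psi> (x + y) = gs_add (KG_lift G act \<psi> x) (KG_lift G act \<psi> y)"
  by (auto simp: KG_lift_def gs_add_def fun_eq_iff gs_basis_in_group_semiring
      KG_module_act_add_right[OF assms(1)] K_dual_add[OF assms(2)])

lemma KG_lift_zero:
  assumes "is_KG_module G act" "\<psi> \<in> K_dual G act"
  shows "KG_lift G act \<psi> 0 = gs_zero"
  by (auto simp: KG_lift_def gs_zero_def fun_eq_iff gs_basis_in_group_semiring
      KG_module_act_zero_right[OF assms(1)] K_dual_zero[OF assms])

lemma KG_lift_at_one:
  assumes "is_KG_module G act"
  shows "KG_lift G act \<psi> x \<one> = \<psi> x"
proof -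
  have basis_one: "gs_basis G \<one> = gs_scalar G 1"
    by (simp add: gs_basis_def gs_scalar_def fun_eq_iff)
  show ?thesis
    by (simp add: KG_lift_def basis_one KG_module_act_one[OF assms])
qed

lemma KG_lift_act:
  assumes fin: "finite (carrier G)" and mod: "is_KG_module G act" and \<psi>: "\<psi> \<in> K_dual G act"
    and a: "a \<in> group_semiring G"
  shows "KG_lift G act \<psi> (act a x) = gs_mult G a (KG_lift G act \<psi> x)"
proof
  fix h
  show "KG_lift G act \<psi> (act a x) h = gs_mult G a (KG_lift G act \<psi> x) h"
  proof (cases "h \<in> carrier G")
    case h: True
    have "KG_lift G act \<psi> (act a x) h = \<psi> (act (gs_mult G (gs_basis G (inv h)) a) x)"
      using h by (simp add: KG_lift_def KG_module_act_mult[OF mod] gs_basis_in_group_semiring a)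
    also have "\<dots> = (\<Sum>g\<in>carrier G. gs_mult G (gs_basis G (inv h)) a g * \<psi> (act (gs_basis G g) x))"
      by (rule K_dual_act_expansion[OF fin mod \<psi> gs_mult_in_group_semiring])
    also have "\<dots> = (\<Sum>g\<in>carrier G. a (h \<otimes> g) * \<psi> (act (gs_basis G g) x))"
      using h by (intro sum.cong refl) (simp add: gs_mult_basis_left[OF fin])
    also have "\<dots> = (\<Sum>y\<in>carrier G. a y * \<psi> (act (gs_basis G (inv h \<otimes> y)) x))"
      using h by (intro sum.reindex_bij_witness[where i = "\<lambda>y. inv h \<otimes> y" and j = "\<lambda>g. h \<otimes> g"])
        (simp_all add: m_assoc[symmetric])
    also have "\<dots> = (\<Sum>y\<in>carrier G. a y * KG_lift G act \<psi> x (inv y \<otimes> h))"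
      using h by (intro sum.cong refl) (simp add: KG_lift_def inv_mult_group)
    also have "\<dots> = gs_mult G a (KG_lift G act \<psi> x) h"
      using h by (simp add: gs_mult_def)
    finally show ?thesis .
  qed (simp add: KG_lift_def gs_mult_def)
qed

end

lemma weakly_reflexive_separates:
  assumes "weakly_reflexive G act"
    and "\<forall>\<psi>\<in>K_dual G act. \<exists>c. \<psi> = (\<lambda>x. \<Sum>s\<in>S. c s * s x)"
    and "\<forall>s\<in>S. s x = s y"
  shows "x = y"
proof -
  have "\<psi> x = \<psi> y" if \<psi>: "\<psi> \<in> K_dual G act" for \<psi>
  proof -
    obtain c where c: "\<psi> = (\<lambda>x. \<Sum>s\<in>S. c s * s x)"
      using bspec[OF assms(2) \<psi>] by (elim exE)
    have "(\<Sum>s\<in>S. c s * s x) = (\<Sum>s\<in>S. c s * s y)"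
      using assms(3) by (intro sum.cong) auto
    then show ?thesis
      by (subst (1 2) c) simp
  qed
  then have "canonical_bidual_map G act x = canonical_bidual_map G act y"
    unfolding canonical_bidual_map_def by (rule restrict_ext)
  then show ?thesis
    using assms(1) by (simp add: weakly_reflexive_def inj_def)
qed

lemma KG_iso_onto_range:
  assumes "inj \<phi>" and "range \<phi> \<subseteq> free_KG G n"
    and add: "\<And>x y. \<phi> (x + y) = (\<lambda>i. gs_add (\<phi> x i) (\<phi> y i))"
    and zero: "\<phi> 0 = (\<lambda>i. gs_zero)"
    and act: "\<And>a x. a \<in> group_semiring G \<Longrightarrow> \<phi> (act a x) = free_act G a (\<phi> x)"
  shows "KG_submodule_of_free G n (range \<phi>) \<and> KG_iso_onto G act \<phi> (range \<phi>)"
proof -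
  have "(\<lambda>i. gs_add (\<phi> x i) (\<phi> y i)) \<in> range \<phi>" for x y
    unfolding add[symmetric] by (rule rangeI)
  moreover have "free_act G a (\<phi> x) \<in> range \<phi>" if "a \<in> group_semiring G" for a x
    unfolding act[OF that, symmetric] by (rule rangeI)
  moreover have "(\<lambda>i. gs_zero) \<in> range \<phi>"
    unfolding zero[symmetric] by (rule rangeI)
  ultimately show ?thesis
    using assms unfolding KG_submodule_of_free_def KG_iso_onto_def bij_betw_def
    by (simp add: image_iff)
qed

definition KG_embedding ::
  "('g, 'b) monoid_scheme \<Rightarrow> (('g \<Rightarrow> 'k::comm_semiring_1) \<Rightarrow> 'm \<Rightarrow> 'm) \<Rightarrow> nat \<Rightarrow> (nat \<Rightarrow> 'm \<Rightarrow> 'k)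
    \<Rightarrow> 'm \<Rightarrow> nat \<Rightarrow> 'g \<Rightarrow> 'k"
  where "KG_embedding G act n f x = (\<lambda>i. if i < n then KG_lift G act (f i) x else gs_zero)"

lemma (in group) KG_embedding_iso_onto_range:
  assumes fin: "finite (carrier G)" and mod: "is_KG_module G act"
    and dual: "\<And>i. i < n \<Longrightarrow> f i \<in> K_dual G act"
    and separating: "\<And>x y. (\<And>i. i < n \<Longrightarrow> f i x = f i y) \<Longrightarrow> x = y"
  defines "\<phi> \<equiv> KG_embedding G act n f"
  shows "KG_submodule_of_free G n (range \<phi>) \<and> KG_iso_onto G act \<phi> (range \<phi>)"
proof (rule KG_iso_onto_range)
  show "inj \<phi>"
  proof (rule injI)
    fix x y assume "\<phi> x = \<phi> y"
    then have "\<phi> x i \<one> = \<phi> y i \<one>" for i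
      by simp
    then show "x = y"
      by (intro separating) (metis \<phi>_def KG_embedding_def KG_lift_at_one[OF mod])
  qed
  show "range \<phi> \<subseteq> free_KG G n"
    by (auto simp: \<phi>_def KG_embedding_def free_KG_def KG_lift_in_group_semiring)
  show "\<phi> (x + y) = (\<lambda>i. gs_add (\<phi> x i) (\<phi> y i))" for x y
    by (auto simp: \<phi>_def KG_embedding_def KG_lift_add[OF mod dual] gs_add_def gs_zero_def)
  show "\<phi> 0 = (\<lambda>i. gs_zero)"
    by (auto simp: \<phi>_def KG_embedding_def KG_lift_zero[OF mod dual])
  show "\<phi> (act a x) = free_act G a (\<phi> x)" if "a \<in> group_semiring G" for a x
    by (auto simp: \<phi>_def KG_embedding_def free_act_def KG_lift_act[OF fin mod dual that]
        gs_mult_zero_right)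
qed

theorem proposition4p8:
  fixes G :: "'g monoid"
    and act :: "('g \<Rightarrow> 'k::comm_semiring_1) \<Rightarrow> 'm::comm_monoid_add \<Rightarrow> 'm"
  assumes "group G"
    and "finite (carrier G)"
    and "is_KG_module G act"
    and "weakly_reflexive G act"
    and "dual_fin_gen G act"
  shows "\<exists>n::nat. \<exists>N \<phi>. KG_submodule_of_free G n N \<and> KG_iso_onto G act \<phi> N"
proof -
  obtain S where "finite S" and S_dual: "S \<subseteq> K_dual G act"
    and S_generates: "\<forall>\<psi>\<in>K_dual G act. \<exists>c. \<psi> = (\<lambda>x. \<Sum>s\<in>S. c s * s x)"
    using assms(5) unfolding dual_fin_gen_def by blast
  then obtain f where f: "bij_betw f {0..<card S} S"
    using ex_bij_betw_nat_finite by blast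
  have "f i \<in> K_dual G act" if "i < card S" for i
    using f S_dual that by (auto simp: bij_betw_def)
  moreover have "x = y" if "\<And>i. i < card S \<Longrightarrow> f i x = f i y" for x y
  proof (rule weakly_reflexive_separates[OF assms(4) S_generates])
    have "\<forall>s\<in>f ` {0..<card S}. s x = s y"
      using that by simp
    then show "\<forall>s\<in>S. s x = s y"
      using bij_betw_imp_surj_on[OF f, symmetric] by simp
  qed
  ultimately show ?thesis
    using group.KG_embedding_iso_onto_range[OF assms(1-3)] by blast
qed

end
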